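(* In a combinatorial auction as described in the context, let $(x^*,p)$ be a Walrasian equilibrium which is not a price-match equilibrium, and let $\bar\imath$ be a bidder witnessing this, i.e. there is no feasible allocation $x^{-\bar\imath}$ with $x^{-\bar\imath}_k=0$ for all $k\in\mathcal K_{\bar\imath}$, $p\,a^k\le b_k$ for all $k$ with $x^{-\bar\imath}_k=1$, and $p\bm A x^{-\bar\imath}=p\bm Ax^*$. Then for some small $\epsilon>0$, the payment vector $\bar\rho$ defined by $\bar\rho_i=p\,a^{i*}$ for $i\ne\bar\imath$ and $\bar\rho_{\bar\imath}=p\,a^{\bar\imath*}-\epsilon$ is core-selecting at $x^*$. In particular, there is a core point with strictly lower total payments than the WE payments.
   Context: Combinatorial auction (CA): item types $j\in\mathcal J=\{1,\dots,J\}$ with supply $c_j\in\mathbb Z_{\ge1}$ (supply vector $c$); bidders $\mathcal I=\{1,\dots,I\}$; a finite set of bids $\mathcal K$, each bid $k$ made by a bidder $i(k)$ and consisting of a bundle $a^k\in\mathbb Z^J_{\ge0}$, $a^k\le c$, and an amount $b_k\ge0$; $\mathcal K_i$ is the set of bids of bidder $i$; bids are taken to be truthful. $\bm A$ is the $J\times K$ matrix with columns $a^k$, $\bm B$ the $I\times K$ matrix with $\bm B_{i,k}=1$ iff $k\in\mathcal K_i$. A feasible allocation is $x\in\{0,1\}^K$ with $\bm Ax\le c$, $\bm Bx\le\bm 1$. For a set of bidders $\mathcal C$ and supply $c'$, $w(\mathcal C,c',\cdot)$ is the maximum total bid amount over feasible allocations (supply $c'$) using only bids of bidders in $\mathcal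 C$. $x^*$ is an efficient (optimal) allocation; $a^{i*}$, $b_{i*}$ are the bundle and amount of bidder $i$'s accepted bid ($\bm 0$, $0$ if none). A payment vector $\rho$ ($\rho_i=0$ for bidders with no accepted bid) is core-selecting at $x^*$ if $\rho_i\le b_{i*}$ for all $i$ and for all $\mathcal C\subseteq\mathcal I$: $\sum_{i\in\mathcal C}(b_{i*}-\rho_i)+\sum_{i\in\mathcal I}\rho_i\ge w(\mathcal C,c,\mathcal K^{\mathcal C})$, $\mathcal K^{\mathcal C}$ the bids of bidders in $\mathcal C$. A Walrasian equilibrium (WE) is $(x^*,p)$ with $x^*$ efficient, $p\in\mathbb R^J_{\ge0}$, surpluses $s_i=b_{i*}-p\,a^{i*}\ge0$, $p\,a^k+s_{i(k)}\ge b_k$ for every bid $k$, and $p_j=0$ whenever $(\bm Ax^* )_j<c_j$; payments are $p\,a^{i*}$. A WE $(x^*,p)$ is a price-match equilibrium (PME) if for every bidder $i$ there is a feasible allocation $x^{-i}$ with $x^{-i}_k=0$ for all $k\in\mathcal K_i$, $p\,a^k\le b_k$ for every $k$ with $x^{-i}_k=1$, and $p\bm Ax^{-i}=p\bm Ax^*$. (Items may include artificial items, i.e. valid cuts added as rows of $\bm A$; they are treated like any other item.) *)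

theory Defs
  imports Complex_Main
begin

text \<open>
Combinatorial auction data, passed explicitly:
  J :: 'j set       item types (finite), c j :: nat supply,
  I :: 'i set       bidders (finite),
  K :: 'k set       bids (finite), bidder k = i(k), a k j = (a^k)_j, b k = b_k.
An allocation x in {0,1}^K is represented by the set S = {k. x_k = 1} \<subseteq> K.
\<close>

definition feasible ::
  "'j set \<Rightarrow> 'k set \<Rightarrow> ('k \<Rightarrow> 'i) \<Rightarrow> ('k \<Rightarrow> 'j \<Rightarrow> nat) \<Rightarrow> ('j \<Rightarrow> nat) \<Rightarrow> 'k set \<Rightarrow> bool" where
  "feasible J K bidder a c S \<longleftrightarrow>
     S \<subseteq> K \<and> (\<forall>j\<in>J. (\<Sum>k\<in>S. a k j) \<le> c j) \<and> (\<forall>i. card {k\<in>S. bidder k = i} \<le> 1)"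

definition wval ::
  "'j set \<Rightarrow> 'k set \<Rightarrow> ('k \<Rightarrow> 'i) \<Rightarrow> ('k \<Rightarrow> 'j \<Rightarrow> nat) \<Rightarrow> ('k \<Rightarrow> real) \<Rightarrow> ('j \<Rightarrow> nat)
   \<Rightarrow> 'i set \<Rightarrow> real" where
  "wval J K bidder a b c C =
     Max {(\<Sum>k\<in>S. b k) | S. feasible J K bidder a c S \<and> (\<forall>k\<in>S. bidder k \<in> C)}"

definition efficient ::
  "'j set \<Rightarrow> 'k set \<Rightarrow> ('k \<Rightarrow> 'i) \<Rightarrow> ('k \<Rightarrow> 'j \<Rightarrow> nat) \<Rightarrow> ('k \<Rightarrow> real) \<Rightarrow> ('j \<Rightarrow> nat)
   \<Rightarrow> 'k set \<Rightarrow> bool" where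
  "efficient J K bidder a b c X \<longleftrightarrow>
     feasible J K bidder a c X \<and>
     (\<forall>S. feasible J K bidder a c S \<longrightarrow> (\<Sum>k\<in>S. b k) \<le> (\<Sum>k\<in>X. b k))"

text \<open>Accepted bundle a^{i*} and amount b_{i*} of bidder i under allocation X
  (X contains at most one bid of each bidder; empty sum = 0 if none).\<close>
definition acc_bundle :: "('k \<Rightarrow> 'i) \<Rightarrow> ('k \<Rightarrow> 'j \<Rightarrow> nat) \<Rightarrow> 'k set \<Rightarrow> 'i \<Rightarrow> 'j \<Rightarrow> nat" where
  "acc_bundle bidder a X i j = (\<Sum>k\<in>{k\<in>X. bidder k = i}. a k j)"

definition acc_amount :: "('k \<Rightarrow> 'i) \<Rightarrow> ('k \<Rightarrow> real) \<Rightarrow> 'k set \<Rightarrow> 'i \<Rightarrow> real" where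
  "acc_amount bidder b X i = (\<Sum>k\<in>{k\<in>X. bidder k = i}. b k)"

definition price :: "'j set \<Rightarrow> ('j \<Rightarrow> real) \<Rightarrow> ('j \<Rightarrow> nat) \<Rightarrow> real" where
  "price J p v = (\<Sum>j\<in>J. p j * real (v j))"

definition demand :: "('k \<Rightarrow> 'j \<Rightarrow> nat) \<Rightarrow> 'k set \<Rightarrow> 'j \<Rightarrow> nat" where
  "demand a S j = (\<Sum>k\<in>S. a k j)"

definition walrasian ::
  "'j set \<Rightarrow> 'i set \<Rightarrow> 'k set \<Rightarrow> ('k \<Rightarrow> 'i) \<Rightarrow> ('k \<Rightarrow> 'j \<Rightarrow> nat) \<Rightarrow> ('k \<Rightarrow> real) \<Rightarrow> ('j \<Rightarrow> nat)
   \<Rightarrow> 'k set \<Rightarrow> ('j \<Rightarrow> real) \<Rightarrow> bool" where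
  "walrasian J I K bidder a b c X p \<longleftrightarrow>
     efficient J K bidder a b c X \<and>
     (\<forall>j\<in>J. p j \<ge> 0) \<and>
     (\<forall>i\<in>I. acc_amount bidder b X i - price J p (acc_bundle bidder a X i) \<ge> 0) \<and>
     (\<forall>k\<in>K. price J p (a k) +
              (acc_amount bidder b X (bidder k) - price J p (acc_bundle bidder a X (bidder k))) \<ge> b k) \<and>
     (\<forall>j\<in>J. demand a X j < c j \<longrightarrow> p j = 0)"

definition price_match_bidder ::
  "'j set \<Rightarrow> 'k set \<Rightarrow> ('k \<Rightarrow> 'i) \<Rightarrow> ('k \<Rightarrow> 'j \<Rightarrow> nat) \<Rightarrow> ('k \<Rightarrow> real) \<Rightarrow> ('j \<Rightarrow> nat)
   \<Rightarrow> 'k set \<Rightarrow> ('j \<Rightarrow> real) \<Rightarrow> 'i \<Rightarrow> bool" where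
  "price_match_bidder J K bidder a b c X p i \<longleftrightarrow>
     (\<exists>S. feasible J K bidder a c S \<and> (\<forall>k\<in>S. bidder k \<noteq> i) \<and>
          (\<forall>k\<in>S. price J p (a k) \<le> b k) \<and>
          price J p (demand a S) = price J p (demand a X))"

definition price_match_eq ::
  "'j set \<Rightarrow> 'i set \<Rightarrow> 'k set \<Rightarrow> ('k \<Rightarrow> 'i) \<Rightarrow> ('k \<Rightarrow> 'j \<Rightarrow> nat) \<Rightarrow> ('k \<Rightarrow> real) \<Rightarrow> ('j \<Rightarrow> nat)
   \<Rightarrow> 'k set \<Rightarrow> ('j \<Rightarrow> real) \<Rightarrow> bool" where
  "price_match_eq J I K bidder a b c X p \<longleftrightarrow>
     walrasian J I K bidder a b c X p \<and> (\<forall>i\<in>I. price_match_bidder J K bidder a b c X p i)"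

definition core_selecting ::
  "'j set \<Rightarrow> 'i set \<Rightarrow> 'k set \<Rightarrow> ('k \<Rightarrow> 'i) \<Rightarrow> ('k \<Rightarrow> 'j \<Rightarrow> nat) \<Rightarrow> ('k \<Rightarrow> real) \<Rightarrow> ('j \<Rightarrow> nat)
   \<Rightarrow> 'k set \<Rightarrow> ('i \<Rightarrow> real) \<Rightarrow> bool" where
  "core_selecting J I K bidder a b c X \<rho> \<longleftrightarrow>
     (\<forall>i\<in>I. {k\<in>X. bidder k = i} = {} \<longrightarrow> \<rho> i = 0) \<and>
     (\<forall>i\<in>I. \<rho> i \<le> acc_amount bidder b X i) \<and>
     (\<forall>C. C \<subseteq> I \<longrightarrow>
        (\<Sum>i\<in>C. acc_amount bidder b X i - \<rho> i) + (\<Sum>i\<in>I. \<rho> i) \<ge> wval J K bidder a b c C)"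

end

theory Submission
  imports Defs
begin

(* Let s_i be the WE surplus of bidder i and call
     slack S = p A x* + sum_{k in S} s_{i(k)} - sum_{k in S} b_k
   the slack of a feasible allocation S. The WE conditions make it a sum of nonnegative terms:
   p A x^S <= p A x*, because prices vanish on items not sold out, and b_k <= p a^k + s_{i(k)}
   for every bid. Slack 0 forces p A x^S = p A x* and p a^k <= b_k on S, i.e. a price match.
   So if the bidder ibar is not price-matched, all of the finitely many allocations avoiding ibar
   have positive slack, bounded below by some eps > 0. Lowering ibar's payment by eps lowers the
   left side of the core constraint of a coalition C only when ibar is not in C, and then every
   allocation available to C avoids ibar, so the loss eps is covered by its slack. *)

lemma price_demand:
  assumes "finite S"
  shows "price J p (demand a S) = (\<Sum>k\<in>S. price J p (a k))"
  unfolding price_def demand_def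
  by (simp add: of_nat_sum sum_distrib_left sum.swap[of _ J S])

lemma acc_bundle_eq_demand: "acc_bundle bidder a X i = demand a {k\<in>X. bidder k = i}"
  unfolding acc_bundle_def demand_def by (rule ext) simp

lemma sum_price_acc_bundle:
  assumes "finite X" "finite I" "bidder ` X \<subseteq> I"
  shows "(\<Sum>i\<in>I. price J p (acc_bundle bidder a X i)) = price J p (demand a X)"
proof -
  have "(\<Sum>i\<in>I. price J p (acc_bundle bidder a X i))
      = (\<Sum>i\<in>I. \<Sum>k\<in>{k\<in>X. bidder k = i}. price J p (a k))"
    using assms(1) by (simp add: acc_bundle_eq_demand price_demand)
  also have "\<dots> = (\<Sum>k\<in>X. price J p (a k))"
    using sum.group[OF assms] by simp
  also have "\<dots> = price J p (demand a X)"
    using assms(1) by (simp add: price_demand)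
  finally show ?thesis .
qed

lemma price_acc_bundle_eq_0:
  assumes "{k\<in>X. bidder k = i} = {}"
  shows "price J p (acc_bundle bidder a X i) = 0"
  unfolding price_def acc_bundle_def assms by simp

lemma feasible_empty: "feasible J K bidder a c {}"
  unfolding feasible_def by simp

lemma feasible_subset: "feasible J K bidder a c S \<Longrightarrow> S \<subseteq> K"
  unfolding feasible_def by blast

lemma finite_feasible: "finite K \<Longrightarrow> finite {S. feasible J K bidder a c S}"
  by (rule finite_subset[of _ "Pow K"]) (auto dest: feasible_subset)

lemma feasible_inj_on_bidder:
  assumes "feasible J K bidder a c S" "finite K"
  shows "inj_on bidder S"
proof (rule inj_onI, rule ccontr)
  fix x y
  assume xy: "x \<in> S" "y \<in> S" "bidder x = bidder y" "x \<noteq> y"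
  have "finite S"
    using assms by (meson feasible_subset finite_subset)
  then have "card {x, y} \<le> card {k\<in>S. bidder k = bidder x}"
    using xy by (intro card_mono) auto
  moreover have "card {k\<in>S. bidder k = bidder x} \<le> 1"
    using assms unfolding feasible_def by blast
  ultimately show False
    using xy by simp
qed

lemma feasible_bids_of_bidder:
  assumes "feasible J K bidder a c S" "finite K" "k \<in> S"
  shows "{k'\<in>S. bidder k' = bidder k} = {k}"
  using feasible_inj_on_bidder[OF assms(1,2)] assms(3) by (auto dest: inj_onD)

lemma wval_le:
  assumes "finite K"
    and "\<And>S. feasible J K bidder a c S \<Longrightarrow> \<forall>k\<in>S. bidder k \<in> C \<Longrightarrow> (\<Sum>k\<in>S. b k) \<le> L"
  shows "wval J K bidder a b c C \<le> L"
proof -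
  let ?W = "{(\<Sum>k\<in>S. b k) | S. feasible J K bidder a c S \<and> (\<forall>k\<in>S. bidder k \<in> C)}"
  have "?W \<subseteq> (\<lambda>S. \<Sum>k\<in>S. b k) ` {S. feasible J K bidder a c S}"
    by blast
  then have "finite ?W"
    using finite_feasible[OF assms(1)] by (meson finite_imageI finite_subset)
  moreover have "?W \<noteq> {}"
    using feasible_empty by blast
  ultimately show ?thesis
    unfolding wval_def using assms(2) by (intro Max.boundedI) auto
qed

locale walrasian_equilibrium =
  fixes J :: "'j set" and I :: "'i set" and K :: "'k set"
    and bidder :: "'k \<Rightarrow> 'i" and a :: "'k \<Rightarrow> 'j \<Rightarrow> nat" and b :: "'k \<Rightarrow> real"
    and c :: "'j \<Rightarrow> nat" and X :: "'k set" and p :: "'j \<Rightarrow> real"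
  assumes finite_I: "finite I" and finite_K: "finite K"
    and bidder_in_I: "\<And>k. k \<in> K \<Longrightarrow> bidder k \<in> I"
    and walrasian: "walrasian J I K bidder a b c X p"
begin

definition surplus :: "'i \<Rightarrow> real" where
  "surplus i = acc_amount bidder b X i - price J p (acc_bundle bidder a X i)"

definition revenue :: real where
  "revenue = price J p (demand a X)"

definition slack :: "'k set \<Rightarrow> real" where
  "slack S = revenue + (\<Sum>k\<in>S. surplus (bidder k)) - (\<Sum>k\<in>S. b k)"

lemma feasible_X: "feasible J K bidder a c X"
  using walrasian unfolding walrasian_def efficient_def by blast

lemma finite_X: "finite X"
  using feasible_subset[OF feasible_X] finite_K by (rule finite_subset)

lemma surplus_nonneg: "i \<in> I \<Longrightarrow> 0 \<le> surplus i"
  using walrasian unfolding walrasian_def surplus_def by blast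

lemma bid_le_price_plus_surplus: "k \<in> K \<Longrightarrow> b k \<le> price J p (a k) + surplus (bidder k)"
  using walrasian unfolding walrasian_def surplus_def by blast

lemma sum_price_acc_bundle_eq_revenue:
  "(\<Sum>i\<in>I. price J p (acc_bundle bidder a X i)) = revenue"
  unfolding revenue_def using finite_X finite_I feasible_subset[OF feasible_X] bidder_in_I
  by (intro sum_price_acc_bundle) auto

lemma price_demand_le_revenue:
  assumes "feasible J K bidder a c S"
  shows "price J p (demand a S) \<le> revenue"
  unfolding revenue_def price_def
proof (rule sum_mono)
  fix j
  assume j: "j \<in> J"
  show "p j * real (demand a S j) \<le> p j * real (demand a X j)"
  proof (cases "demand a X j < c j")
    case True
    then have "p j = 0"
      using walrasian j unfolding walrasian_def by blast
    then show ?thesis by simp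
  next
    case False
    moreover have "demand a S j \<le> c j"
      using assms j unfolding feasible_def demand_def by blast
    moreover have "0 \<le> p j"
      using walrasian j unfolding walrasian_def by blast
    ultimately show ?thesis
      by (intro mult_left_mono) auto
  qed
qed

lemma slack_eq:
  assumes "feasible J K bidder a c S"
  shows "slack S = (revenue - price J p (demand a S))
                   + (\<Sum>k\<in>S. price J p (a k) + surplus (bidder k) - b k)"
  using finite_subset[OF feasible_subset[OF assms] finite_K]
  unfolding slack_def by (simp add: price_demand sum.distrib sum_subtractf)

lemma slack_nonneg:
  assumes "feasible J K bidder a c S"
  shows "0 \<le> slack S"
proof -
  have "0 \<le> revenue - price J p (demand a S)"
    using price_demand_le_revenue[OF assms] by simp
  moreover have "0 \<le> (\<Sum>k\<in>S. price J p (a k) + surplus (bidder k) - b k)"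
    using bid_le_price_plus_surplus feasible_subset[OF assms] by (intro sum_nonneg) force
  ultimately show ?thesis
    using slack_eq[OF assms] by linarith
qed

lemma price_match_of_slack_eq_0:
  assumes S: "feasible J K bidder a c S" and avoids: "\<forall>k\<in>S. bidder k \<noteq> i"
    and zero: "slack S = 0"
  shows "price_match_bidder J K bidder a b c X p i"
proof -
  have SK: "S \<subseteq> K"
    using feasible_subset[OF S] .
  define t where "t k = price J p (a k) + surplus (bidder k) - b k" for k
  have t_nonneg: "\<forall>k\<in>S. 0 \<le> t k"
    using bid_le_price_plus_surplus SK unfolding t_def by force
  have price_gap: "0 \<le> revenue - price J p (demand a S)"
    using price_demand_le_revenue[OF S] by simp
  have "0 \<le> sum t S"
    using t_nonneg by (simp add: sum_nonneg)
  with price_gap zero slack_eq[OF S] have revenue_eq: "price J p (demand a S) = revenue"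
    and "sum t S = 0"
    unfolding t_def by linarith+
  then have "\<forall>k\<in>S. t k = 0"
    using t_nonneg finite_subset[OF SK finite_K] sum_nonneg_eq_0_iff by blast
  then have "\<forall>k\<in>S. price J p (a k) \<le> b k"
    using surplus_nonneg bidder_in_I SK unfolding t_def by force
  with S avoids revenue_eq show ?thesis
    unfolding price_match_bidder_def revenue_def by blast
qed

lemma slack_bounded_below:
  assumes "\<not> price_match_bidder J K bidder a b c X p i"
  obtains \<epsilon> where "0 < \<epsilon>"
    and "\<And>S. feasible J K bidder a c S \<Longrightarrow> \<forall>k\<in>S. bidder k \<noteq> i \<Longrightarrow> \<epsilon> \<le> slack S"
proof -
  let ?F = "{S. feasible J K bidder a c S \<and> (\<forall>k\<in>S. bidder k \<noteq> i)}"
  have "finite ?F"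
    by (rule finite_subset[OF _ finite_feasible[OF finite_K]]) blast
  then have "finite (slack ` ?F)"
    by simp
  moreover have "slack ` ?F \<noteq> {}"
    using feasible_empty by blast
  moreover have "\<forall>S\<in>?F. 0 < slack S"
    using slack_nonneg price_match_of_slack_eq_0 assms by force
  ultimately have "0 < Min (slack ` ?F)"
    by (subst Min_gr_iff) auto
  moreover have "Min (slack ` ?F) \<le> slack S" if "S \<in> ?F" for S
    using \<open>finite (slack ` ?F)\<close> that by (intro Min_le) auto
  ultimately show ?thesis
    using that by blast
qed

lemma has_accepted_bid_if_not_price_match:
  assumes "\<not> price_match_bidder J K bidder a b c X p i"
  shows "{k\<in>X. bidder k = i} \<noteq> {}"
proof
  assume no_bid: "{k\<in>X. bidder k = i} = {}"
  have "price J p (a k) \<le> b k" if k: "k \<in> X" for k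
  proof -
    have "{k'\<in>X. bidder k' = bidder k} = {k}"
      using feasible_bids_of_bidder[OF feasible_X finite_K k] .
    moreover have "0 \<le> surplus (bidder k)"
      using surplus_nonneg bidder_in_I feasible_subset[OF feasible_X] k by blast
    ultimately show ?thesis
      unfolding surplus_def acc_amount_def acc_bundle_def by simp
  qed
  then have "price_match_bidder J K bidder a b c X p i"
    unfolding price_match_bidder_def using feasible_X no_bid by blast
  with assms show False ..
qed

lemma sum_surplus_le:
  assumes "feasible J K bidder a c S" "\<forall>k\<in>S. bidder k \<in> C" "C \<subseteq> I"
  shows "(\<Sum>k\<in>S. surplus (bidder k)) \<le> (\<Sum>i\<in>C. surplus i)"
proof -
  have "(\<Sum>k\<in>S. surplus (bidder k)) = (\<Sum>i\<in>bidder ` S. surplus i)"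
    using sum.reindex[OF feasible_inj_on_bidder[OF assms(1) finite_K], of surplus] by simp
  also have "\<dots> \<le> (\<Sum>i\<in>C. surplus i)"
    using assms(2,3) surplus_nonneg finite_subset[OF assms(3) finite_I]
    by (intro sum_mono2) auto
  finally show ?thesis .
qed

lemma sum_discounted_payments:
  assumes "i0 \<in> I"
  shows "(\<Sum>i\<in>I. if i = i0 then price J p (acc_bundle bidder a X i) - \<epsilon>
                   else price J p (acc_bundle bidder a X i)) = revenue - \<epsilon>"
proof -
  have "(\<Sum>i\<in>I. if i = i0 then price J p (acc_bundle bidder a X i) - \<epsilon>
                  else price J p (acc_bundle bidder a X i))
      = (\<Sum>i\<in>I. price J p (acc_bundle bidder a X i) - (if i = i0 then \<epsilon> else 0))"
    by (intro sum.cong) auto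
  also have "\<dots> = revenue - \<epsilon>"
    using sum_price_acc_bundle_eq_revenue finite_I assms by (simp add: sum_subtractf)
  finally show ?thesis .
qed

lemma core_selecting_discounted:
  assumes "i0 \<in> I" and has_bid: "{k\<in>X. bidder k = i0} \<noteq> {}" and "0 \<le> \<epsilon>"
    and le_slack: "\<And>S. feasible J K bidder a c S \<Longrightarrow> \<forall>k\<in>S. bidder k \<noteq> i0 \<Longrightarrow> \<epsilon> \<le> slack S"
  shows "core_selecting J I K bidder a b c X
           (\<lambda>i. if i = i0 then price J p (acc_bundle bidder a X i) - \<epsilon>
                 else price J p (acc_bundle bidder a X i))"
    (is "core_selecting J I K bidder a b c X ?\<rho>")
proof -
  have sum_\<rho>: "(\<Sum>i\<in>I. ?\<rho> i) = revenue - \<epsilon>"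
    using sum_discounted_payments[OF \<open>i0 \<in> I\<close>] .
  have coalition: "wval J K bidder a b c C
                   \<le> (\<Sum>i\<in>C. acc_amount bidder b X i - ?\<rho> i) + (\<Sum>i\<in>I. ?\<rho> i)"
    if C: "C \<subseteq> I" for C
  proof -
    have "(\<Sum>i\<in>C. acc_amount bidder b X i - ?\<rho> i)
        = (\<Sum>i\<in>C. surplus i + (if i = i0 then \<epsilon> else 0))"
      unfolding surplus_def by (intro sum.cong) auto
    then have rhs: "(\<Sum>i\<in>C. acc_amount bidder b X i - ?\<rho> i) + (\<Sum>i\<in>I. ?\<rho> i)
        = (\<Sum>i\<in>C. surplus i) + (if i0 \<in> C then \<epsilon> else 0) + revenue - \<epsilon>"
      using finite_subset[OF C finite_I] sum_\<rho> by (simp add: sum.distrib)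
    show ?thesis
    proof (rule wval_le[OF finite_K])
      fix S
      assume S: "feasible J K bidder a c S" and SC: "\<forall>k\<in>S. bidder k \<in> C"
      have "(\<Sum>k\<in>S. b k) \<le> revenue + (\<Sum>i\<in>C. surplus i) - slack S"
        using sum_surplus_le[OF S SC C] unfolding slack_def by simp
      moreover have "i0 \<notin> C \<Longrightarrow> \<epsilon> \<le> slack S"
        using le_slack[OF S] SC by blast
      ultimately show "(\<Sum>k\<in>S. b k)
                       \<le> (\<Sum>i\<in>C. acc_amount bidder b X i - ?\<rho> i) + (\<Sum>i\<in>I. ?\<rho> i)"
        unfolding rhs using slack_nonneg[OF S] by (cases "i0 \<in> C") auto
    qed
  qed
  have "?\<rho> i = 0" if "{k\<in>X. bidder k = i} = {}" for i
    using that has_bid price_acc_bundle_eq_0[OF that] by auto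
  moreover have "?\<rho> i \<le> acc_amount bidder b X i" if "i \<in> I" for i
    using surplus_nonneg[OF that] \<open>0 \<le> \<epsilon>\<close> unfolding surplus_def by auto
  ultimately show ?thesis
    unfolding core_selecting_def using coalition by blast
qed

end

theorem theorem2:
  fixes J :: "'j set" and I :: "'i set" and K :: "'k set"
    and bidder :: "'k \<Rightarrow> 'i" and a :: "'k \<Rightarrow> 'j \<Rightarrow> nat" and b :: "'k \<Rightarrow> real"
    and c :: "'j \<Rightarrow> nat" and X :: "'k set" and p :: "'j \<Rightarrow> real" and ibar :: 'i
  assumes "finite J" and "finite I" and "finite K"
    and "\<forall>j\<in>J. c j \<ge> 1"
    and "\<forall>k\<in>K. bidder k \<in> I"
    and "\<forall>k\<in>K. \<forall>j\<in>J. a k j \<le> c j"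
    and "\<forall>k\<in>K. b k \<ge> 0"
    and WE: "walrasian J I K bidder a b c X p"
    and "ibar \<in> I"
    and notPM: "\<not> price_match_bidder J K bidder a b c X p ibar"
  shows "(\<exists>\<epsilon>>0. core_selecting J I K bidder a b c X
            (\<lambda>i. if i = ibar then price J p (acc_bundle bidder a X i) - \<epsilon>
                  else price J p (acc_bundle bidder a X i)))
       \<and> (\<exists>\<rho>. core_selecting J I K bidder a b c X \<rho> \<and>
               (\<Sum>i\<in>I. \<rho> i) < (\<Sum>i\<in>I. price J p (acc_bundle bidder a X i)))"
proof -
  interpret walrasian_equilibrium J I K bidder a b c X p
    using assms by unfold_locales auto
  obtain \<epsilon> where "0 < \<epsilon>"
    and le_slack: "\<And>S. feasible J K bidder a c S \<Longrightarrow> \<forall>k\<in>S. bidder k \<noteq> ibar \<Longrightarrow> \<epsilon> \<le> slack S"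
    using slack_bounded_below[OF notPM] by blast
  let ?\<rho> = "\<lambda>i. if i = ibar then price J p (acc_bundle bidder a X i) - \<epsilon>
                else price J p (acc_bundle bidder a X i)"
  have "core_selecting J I K bidder a b c X ?\<rho>"
    using core_selecting_discounted[OF \<open>ibar \<in> I\<close> has_accepted_bid_if_not_price_match[OF notPM]]
      \<open>0 < \<epsilon>\<close> le_slack by simp
  moreover have "(\<Sum>i\<in>I. ?\<rho> i) < (\<Sum>i\<in>I. price J p (acc_bundle bidder a X i))"
    using sum_discounted_payments[OF \<open>ibar \<in> I\<close>] sum_price_acc_bundle_eq_revenue \<open>0 < \<epsilon>\<close>
    by simp
  ultimately show ?thesis
    using \<open>0 < \<epsilon>\<close> by blast
qed

end
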